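(* Let $i\in\{1/2,1,2\}$, let $r,n$ be positive integers with $rn$ even, and let $m=rn/2$. Let $\rho$ be a uniformly random configuration in $\mathcal C(r)$ and let $\mu$ be the expectation of $\vartheta_i(\sigma(\rho))$. Then for every $t>0$, $$\Pr\big(|\vartheta_i(\sigma(\rho))-\mu|>t\big)\leq 2\exp(-t^2/(128m)).$$
   Context: Let $V=\{1,\dots,n\}$ and $W=V\times\{1,\dots,r\}$ (half-edges). A configuration is a partition of $W$ into $m=rn/2$ pairs; $\mathcal C(r)$ is the set of all configurations, equipped with the uniform distribution. Each configuration $\rho$ yields an $r$-regular multigraph $\pi(\rho)$ on $V$ by projecting each pair $\{(u,a),(v,b)\}$ to an edge $\{u,v\}$; $\sigma(\rho)$ is the simple graph obtained from $\pi(\rho)$ by deleting loops and replacing multiple edges by single edges. For a graph $G=(V,E)$ and real $k>1$, unit vectors $(v_1,\dots,v_n)$ in $\mathbb R^n$ form a vector $k$-coloring if $\langle v_i,v_j\rangle\leq-1/(k-1)$ for all edges; strict if equality holds on all edges; rigid if equality holds on all edges and $\langle v_i,v_j\rangle\geq-1/(k-1)$ for all non-adjacent $i\neq j$. $\bar\vartheta_{1/2}(G),\bar\vartheta_1(G),\bar\vartheta_2(G)$ are the infima of $k>1$ admitting a vector, strict vector, resp. rigid vector $k$-coloring, and $\vartheta_i(G)=\bar\vartheta_i(\bar G)$ with $\bar G$ the complement of $G$ ($\vartheta_1$ is the Lovász number). *)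

theory Defs
  imports Complex_Main "HOL-Library.Multiset"
begin

text \<open>Vertex set V = {1..n} and half-edges W = V x {1..r}.\<close>
definition Vset :: "nat \<Rightarrow> nat set" where
  "Vset n = {1..n}"

definition Wset :: "nat \<Rightarrow> nat \<Rightarrow> (nat \<times> nat) set" where
  "Wset n r = Vset n \<times> {1..r}"

definition configurations :: "nat \<Rightarrow> nat \<Rightarrow> (nat \<times> nat) set set set" where
  "configurations n r =
     {\<rho>. (\<forall>p\<in>\<rho>. p \<subseteq> Wset n r \<and> card p = 2) \<and> (\<forall>x\<in>Wset n r. \<exists>!p. p \<in> \<rho> \<and> x \<in> p)}"

text \<open>pi(rho): the multigraph, as a multiset of edges; an edge {u,v} is the set
  of its endpoints (a loop at u is the singleton {u}).\<close>
definition proj_multigraph :: "(nat \<times> nat) set set \<Rightarrow> nat set multiset" where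
  "proj_multigraph \<rho> = image_mset (\<lambda>p. fst ` p) (mset_set \<rho>)"

text \<open>sigma(rho): delete loops, identify multiple edges. Edge set of a simple graph on {1..n}.\<close>
definition simple_graph :: "(nat \<times> nat) set set \<Rightarrow> nat set set" where
  "simple_graph \<rho> = {e \<in> set_mset (proj_multigraph \<rho>). card e = 2}"

definition complement :: "nat \<Rightarrow> nat set set \<Rightarrow> nat set set" where
  "complement n E = {{a, b} | a b. a \<in> Vset n \<and> b \<in> Vset n \<and> a \<noteq> b \<and> {a, b} \<notin> E}"

text \<open>Vectors in R^n as functions nat => real, using coordinates 0..n-1.\<close>
definition inner_n :: "nat \<Rightarrow> (nat \<Rightarrow> real) \<Rightarrow> (nat \<Rightarrow> real) \<Rightarrow> real" where
  "inner_n n x y = (\<Sum>c<n. x c * y c)"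

datatype theta_index = Half | One | Two

text \<open>v :: nat => (nat => real) assigns to vertex a \<in> {1..n} the vector v a in R^n.
  Half: vector k-colouring; One: strict; Two: rigid.\<close>
definition vector_coloring ::
  "theta_index \<Rightarrow> nat \<Rightarrow> nat set set \<Rightarrow> real \<Rightarrow> (nat \<Rightarrow> nat \<Rightarrow> real) \<Rightarrow> bool" where
  "vector_coloring i n E k v \<longleftrightarrow>
     (\<forall>a\<in>Vset n. inner_n n (v a) (v a) = 1) \<and>
     (\<forall>a\<in>Vset n. \<forall>b\<in>Vset n. a \<noteq> b \<and> {a, b} \<in> E \<longrightarrow>
        (if i = Half then inner_n n (v a) (v b) \<le> - 1 / (k - 1)
         else inner_n n (v a) (v b) = - 1 / (k - 1))) \<and>
     (i = Two \<longrightarrow> (\<forall>a\<in>Vset n. \<forall>b\<in>Vset n. a \<noteq> b \<and> {a, b} \<notin> E \<longrightarrow>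
        inner_n n (v a) (v b) \<ge> - 1 / (k - 1)))"

definition theta_bar :: "theta_index \<Rightarrow> nat \<Rightarrow> nat set set \<Rightarrow> real" where
  "theta_bar i n E = Inf {k. k > 1 \<and> (\<exists>v. vector_coloring i n E k v)}"

definition theta :: "theta_index \<Rightarrow> nat \<Rightarrow> nat set set \<Rightarrow> real" where
  "theta i n E = theta_bar i n (complement n E)"

end

theory Submission
  imports Defs "HOL-Probability.Hoeffding"
begin

(* Adding an edge e to a graph G can only decrease theta_i, and by at most one: a vector
   k-colouring of the complement of G + e becomes a vector (k+1)-colouring of the complement of G
   once one endpoint of e receives a fresh unit vector u orthogonal to all other vectors and the
   remaining vectors are tilted towards -u.  A configuration on the rn = 2m half-edges is encoded
   bijectively by a choice sequence (x_1, ..., x_m) with x_j < 2(m - j) + 1: the first unmatched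
   half-edge is paired with the x_j-th of the remaining ones.  Changing one choice changes at most
   three pairs, hence at most six edges of sigma(rho), hence theta_i by at most six.  McDiarmid's
   bounded-differences inequality for the uniform distribution on the product of the choice ranges
   then gives the tail bound 2 exp(-t^2 / (72 m)). *)

section \<open>McDiarmid's inequality on finite product sets\<close>

lemma set_Cons_eq_image: "set_Cons A XS = (\<lambda>(x, xs). x # xs) ` (A \<times> XS)"
  by (auto simp: set_Cons_def)

lemma finite_listset: "\<forall>A\<in>set As. finite A \<Longrightarrow> finite (listset As)"
  by (induction As) (auto simp: set_Cons_eq_image)

lemma listset_nonempty: "\<forall>A\<in>set As. A \<noteq> {} \<Longrightarrow> listset As \<noteq> {}"
  by (induction As) (auto simp: set_Cons_eq_image)

lemma length_listset: "xs \<in> listset As \<Longrightarrow> length xs = length As"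
  by (induction As arbitrary: xs) (auto simp: set_Cons_def)

lemma listset_update:
  "xs \<in> listset As \<Longrightarrow> j < length As \<Longrightarrow> y \<in> As ! j \<Longrightarrow> xs[j := y] \<in> listset As"
  by (induction As arbitrary: xs j) (auto simp: set_Cons_def nth_Cons split: nat.splits)

lemma nth_mem_listset: "xs \<in> listset As \<Longrightarrow> j < length As \<Longrightarrow> xs ! j \<in> As ! j"
  by (induction As arbitrary: xs j) (auto simp: set_Cons_def nth_Cons split: nat.splits)

lemma sum_listset_Cons:
  "(\<Sum>ys\<in>listset (A # As). F ys) = (\<Sum>x\<in>A. \<Sum>xs\<in>listset As. F (x # xs))"
proof -
  have "inj_on (\<lambda>(x, xs). x # xs) (A \<times> listset As)"
    by (auto simp: inj_on_def)
  then show ?thesis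
    by (simp add: set_Cons_eq_image sum.reindex sum.cartesian_product case_prod_unfold)
qed

lemma card_listset_Cons: "card (listset (A # As)) = card A * card (listset As)"
proof -
  have "inj_on (\<lambda>(x, xs). x # xs) (A \<times> listset As)"
    by (auto simp: inj_on_def)
  then show ?thesis
    by (simp add: set_Cons_eq_image card_image card_cartesian_product)
qed

definition avg :: "('a \<Rightarrow> real) \<Rightarrow> 'a set \<Rightarrow> real" where
  "avg f S = (\<Sum>x\<in>S. f x) / card S"

lemma sum_eq_card_avg: "finite S \<Longrightarrow> S \<noteq> {} \<Longrightarrow> (\<Sum>x\<in>S. f x) = card S * avg f S"
  by (simp add: avg_def)

lemma avg_listset_Cons:
  assumes "finite A" "\<forall>B\<in>set As. finite B \<and> B \<noteq> {}"
  shows "avg f (listset (A # As)) = avg (\<lambda>x. avg (\<lambda>xs. f (x # xs)) (listset As)) A"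
proof -
  have "card (listset As) > 0"
    using assms(2) finite_listset listset_nonempty by (metis card_gt_0_iff)
  then show ?thesis
    unfolding avg_def sum_listset_Cons card_listset_Cons
    by (simp add: sum_divide_distrib field_simps)
qed

lemma abs_avg_diff_le:
  assumes "finite S" "S \<noteq> {}" "\<forall>x\<in>S. \<bar>f x - g x\<bar> \<le> c"
  shows "\<bar>avg f S - avg g S\<bar> \<le> c"
proof -
  have "\<bar>(\<Sum>x\<in>S. f x - g x)\<bar> \<le> (\<Sum>x\<in>S. c)"
    using assms(3) by (intro order.trans[OF sum_abs sum_mono]) auto
  then have "\<bar>(\<Sum>x\<in>S. f x - g x)\<bar> / card S \<le> c"
    using assms(1,2) by (simp add: divide_le_eq mult.commute)
  then show ?thesis
    by (simp add: avg_def sum_subtractf diff_divide_distrib[symmetric])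
qed

lemma cosh_le_exp_half_square: "cosh (s::real) \<le> exp (s\<^sup>2 / 2)"
proof -
  define h where "h = 2 * \<bar>s\<bar>"
  have "- h * (1/2) + ln (1 + (1/2) * (exp h - 1)) \<le> h\<^sup>2 / 8"
    using Hoeffdings_lemma_aux[of h "1/2"] by (simp add: h_def)
  then have "ln ((1 + exp h) / 2) \<le> h / 2 + h\<^sup>2 / 8"
    by (simp add: field_simps)
  moreover have "(1 + exp h) / 2 > 0"
    by (simp add: add_pos_pos)
  ultimately have "(1 + exp h) / 2 \<le> exp (h / 2 + h\<^sup>2 / 8)"
    by (metis exp_le_cancel_iff exp_ln)
  then have "exp (- h / 2) * ((1 + exp h) / 2) \<le> exp (- h / 2) * exp (h / 2 + h\<^sup>2 / 8)"
    by (intro mult_left_mono) auto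
  also have "exp (- h / 2) * exp (h / 2 + h\<^sup>2 / 8) = exp (s\<^sup>2 / 2)"
    by (simp add: exp_add[symmetric] h_def power2_eq_square)
  also have "exp (- h / 2) * ((1 + exp h) / 2) = cosh s"
    by (cases "s \<ge> 0") (simp_all add: cosh_field_def h_def field_simps exp_add[symmetric])
  finally show ?thesis .
qed

text \<open>By convexity, \<open>exp (l * z)\<close> lies below the chord through \<open>z = -c\<close> and \<open>z = c\<close>, whose mean
  over \<open>X\<close> is \<open>cosh (l * c)\<close> because the \<open>z x\<close> sum to zero.\<close>
lemma Hoeffdings_lemma_sum:
  fixes z :: "'a \<Rightarrow> real"
  assumes "finite X" and "(\<Sum>x\<in>X. z x) = 0" and "\<forall>x\<in>X. \<bar>z x\<bar> \<le> c"
  shows "(\<Sum>x\<in>X. exp (l * z x)) \<le> card X * exp (l\<^sup>2 * c\<^sup>2 / 2)"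
proof (cases "c > 0")
  case False
  then have "\<forall>x\<in>X. z x = 0"
    using assms(3) by force
  then show ?thesis
    by (simp add: mult_le_cancel_left1)
next
  case True
  have chord: "exp (l * z x) \<le> cosh (l * c) + z x * (sinh (l * c) / c)" if "x \<in> X" for x
  proof -
    define t where "t = (c + z x) / (2 * c)"
    have t: "0 \<le> t" "t \<le> 1"
      using assms(3) that True by (auto simp: t_def field_simps abs_le_iff)
    have "exp ((1 - t) *\<^sub>R (- (l * c)) + t *\<^sub>R (l * c)) \<le> (1 - t) * exp (- (l * c)) + t * exp (l * c)"
      by (rule convex_onD[OF exp_convex t]) auto
    moreover have "(1 - t) *\<^sub>R (- (l * c)) + t *\<^sub>R (l * c) = l * z x"
      using True by (simp add: t_def field_simps)
    moreover have "(1 - t) * exp (- (l * c)) + t * exp (l * c) = cosh (l * c) + z x * (sinh (l * c) / c)"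
      using True by (simp add: t_def cosh_field_def sinh_field_def field_simps)
    ultimately show ?thesis
      by simp
  qed
  have "(\<Sum>x\<in>X. exp (l * z x)) \<le> (\<Sum>x\<in>X. cosh (l * c) + z x * (sinh (l * c) / c))"
    using chord by (rule sum_mono)
  also have "\<dots> = card X * cosh (l * c)"
    using assms(2) by (simp add: sum.distrib flip: sum_distrib_right sum_divide_distrib)
  also have "\<dots> \<le> card X * exp (l\<^sup>2 * c\<^sup>2 / 2)"
    using cosh_le_exp_half_square[of "l * c"] by (intro mult_left_mono) (auto simp: power_mult_distrib)
  finally show ?thesis .
qed

definition bounded_differences :: "('a list \<Rightarrow> real) \<Rightarrow> 'a set list \<Rightarrow> real \<Rightarrow> bool" where
  "bounded_differences f As c \<longleftrightarrow>
     (\<forall>xs\<in>listset As. \<forall>j<length As. \<forall>y\<in>As ! j. \<bar>f xs - f (xs[j := y])\<bar> \<le> c)"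

lemma bounded_differences_Cons_tail:
  assumes "bounded_differences f (A # As) c" and "x \<in> A"
  shows "bounded_differences (\<lambda>xs. f (x # xs)) As c"
  unfolding bounded_differences_def
proof (intro ballI allI impI)
  fix xs j y assume "xs \<in> listset As" "j < length As" "y \<in> As ! j"
  moreover have "x # xs \<in> listset (A # As)"
    using assms(2) \<open>xs \<in> listset As\<close> by (simp add: set_Cons_def)
  ultimately have "\<bar>f (x # xs) - f ((x # xs)[Suc j := y])\<bar> \<le> c"
    using assms(1) unfolding bounded_differences_def by fastforce
  then show "\<bar>f (x # xs) - f (x # xs[j := y])\<bar> \<le> c"
    by simp
qed

lemma bounded_differences_Cons_head:
  assumes "bounded_differences f (A # As) c" and "x \<in> A" "y \<in> A" "xs \<in> listset As"
  shows "\<bar>f (x # xs) - f (y # xs)\<bar> \<le> c"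
proof -
  have "x # xs \<in> listset (A # As)"
    using assms(2,4) by (simp add: set_Cons_def)
  then have "\<bar>f (x # xs) - f ((x # xs)[0 := y])\<bar> \<le> c"
    using assms(1,3) unfolding bounded_differences_def by fastforce
  then show ?thesis
    by simp
qed

text \<open>Conditioning on the first coordinate: the conditional means \<open>g x\<close> deviate from the mean by at
  most \<open>c\<close>, so Hoeffding's lemma controls them, and the induction hypothesis controls every fibre.\<close>
lemma sum_exp_deviation_listset:
  fixes l c :: real
  assumes "\<forall>A\<in>set As. finite A \<and> A \<noteq> {}" and "bounded_differences f As c"
  shows "(\<Sum>xs\<in>listset As. exp (l * (f xs - avg f (listset As))))
           \<le> card (listset As) * exp (length As * l\<^sup>2 * c\<^sup>2 / 2)"
  using assms
proof (induction As arbitrary: f)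
  case Nil
  then show ?case
    by (simp add: avg_def)
next
  case (Cons A As)
  define S where "S = listset As"
  define g where "g = (\<lambda>x. avg (\<lambda>xs. f (x # xs)) S)"
  define \<mu> where "\<mu> = avg g A"
  define E where "E = exp (length As * l\<^sup>2 * c\<^sup>2 / 2)"
  have A: "finite A" "A \<noteq> {}" and S: "finite S" "S \<noteq> {}"
    using Cons.prems(1) finite_listset listset_nonempty by (auto simp: S_def)
  have \<mu>_eq: "avg f (listset (A # As)) = \<mu>"
    unfolding \<mu>_def g_def S_def using Cons.prems(1) by (intro avg_listset_Cons) auto
  have inner: "(\<Sum>xs\<in>S. exp (l * (f (x # xs) - g x))) \<le> card S * E" if "x \<in> A" for x
    using Cons.IH[OF _ bounded_differences_Cons_tail[OF Cons.prems(2) that]] Cons.prems(1)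
    by (simp add: g_def S_def E_def)
  have g_dist: "\<bar>g x - g y\<bar> \<le> c" if "x \<in> A" "y \<in> A" for x y
    unfolding g_def using S bounded_differences_Cons_head[OF Cons.prems(2) that]
    by (intro abs_avg_diff_le) (auto simp: S_def)
  have dev: "\<bar>g x - \<mu>\<bar> \<le> c" if "x \<in> A" for x
    using abs_avg_diff_le[OF A, of "\<lambda>_. g x" g c] g_dist that A by (simp add: \<mu>_def avg_def)
  have centered: "(\<Sum>x\<in>A. g x - \<mu>) = 0"
    using A by (simp add: sum_subtractf sum_eq_card_avg \<mu>_def)
  have "(\<Sum>ys\<in>listset (A # As). exp (l * (f ys - \<mu>)))
      = (\<Sum>x\<in>A. exp (l * (g x - \<mu>)) * (\<Sum>xs\<in>S. exp (l * (f (x # xs) - g x))))"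
    unfolding sum_listset_Cons S_def[symmetric]
    by (simp add: sum_distrib_left exp_add[symmetric] algebra_simps)
  also have "\<dots> \<le> (\<Sum>x\<in>A. exp (l * (g x - \<mu>))) * (card S * E)"
    unfolding sum_distrib_right using inner by (intro sum_mono mult_left_mono) auto
  also have "\<dots> \<le> (card A * exp (l\<^sup>2 * c\<^sup>2 / 2)) * (card S * E)"
    using Hoeffdings_lemma_sum[OF A(1) centered] dev by (intro mult_right_mono) (auto simp: E_def)
  also have "\<dots> = card (listset (A # As)) * exp (length (A # As) * l\<^sup>2 * c\<^sup>2 / 2)"
    unfolding card_listset_Cons S_def[symmetric] E_def
    by (simp add: exp_add[symmetric] field_simps)
  finally show ?case
    unfolding \<mu>_eq .
qed

lemma upper_tail_listset:
  fixes c t :: real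
  assumes "\<forall>A\<in>set As. finite A \<and> A \<noteq> {}" and "bounded_differences f As c" and "t > 0"
  shows "card {xs \<in> listset As. f xs - avg f (listset As) > t}
           \<le> card (listset As) * exp (- t\<^sup>2 / (2 * real (length As) * c\<^sup>2))"
proof (cases "real (length As) * c\<^sup>2 = 0")
  case True
  \<comment> \<open>the exponent is then \<open>- t\<^sup>2 / 0 = 0\<close>, so the bound is trivial\<close>
  have "card {xs \<in> listset As. f xs - avg f (listset As) > t} \<le> card (listset As)"
    using assms(1) finite_listset by (intro card_mono) auto
  then show ?thesis
    using True by auto
next
  case False
  define k where "k = real (length As)"
  define \<mu> where "\<mu> = avg f (listset As)"
  define l where "l = t / (k * c\<^sup>2)"
  have "k * c\<^sup>2 > 0"
    using False by (simp add: k_def)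
  then have l: "l > 0"
    using assms(3) by (simp add: l_def)
  have "real (card {xs \<in> listset As. f xs - \<mu> > t}) = (\<Sum>xs\<in>{xs \<in> listset As. f xs - \<mu> > t}. 1)"
    by simp
  also have "\<dots> \<le> (\<Sum>xs\<in>{xs \<in> listset As. f xs - \<mu> > t}. exp (l * (f xs - \<mu> - t)))"
    using l by (intro sum_mono) simp
  also have "\<dots> \<le> (\<Sum>xs\<in>listset As. exp (l * (f xs - \<mu> - t)))"
    using assms(1) finite_listset by (intro sum_mono2) auto
  also have "\<dots> = exp (- (l * t)) * (\<Sum>xs\<in>listset As. exp (l * (f xs - \<mu>)))"
    by (simp add: sum_distrib_left exp_add[symmetric] algebra_simps)
  also have "\<dots> \<le> exp (- (l * t)) * (card (listset As) * exp (k * l\<^sup>2 * c\<^sup>2 / 2))"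
    unfolding \<mu>_def k_def using sum_exp_deviation_listset[OF assms(1,2)] by simp
  also have "\<dots> = card (listset As) * exp (k * l\<^sup>2 * c\<^sup>2 / 2 - l * t)"
    by (simp add: exp_add[symmetric])
  also have "k * l\<^sup>2 * c\<^sup>2 / 2 - l * t = - t\<^sup>2 / (2 * k * c\<^sup>2)"
    using \<open>k * c\<^sup>2 > 0\<close> by (simp add: l_def field_simps power2_eq_square)
  finally show ?thesis
    by (simp add: \<mu>_def k_def)
qed

lemma bounded_differences_uminus:
  "bounded_differences (\<lambda>xs. - f xs) As c \<longleftrightarrow> bounded_differences f As c"
  unfolding bounded_differences_def by (simp add: abs_minus_commute)

theorem McDiarmid_listset:
  fixes c t :: real
  assumes "\<forall>A\<in>set As. finite A \<and> A \<noteq> {}" and "bounded_differences f As c" and "t > 0"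
  shows "card {xs \<in> listset As. \<bar>f xs - avg f (listset As)\<bar> > t}
           \<le> 2 * card (listset As) * exp (- t\<^sup>2 / (2 * real (length As) * c\<^sup>2))"
proof -
  let ?S = "listset As"
  let ?bound = "card ?S * exp (- t\<^sup>2 / (2 * real (length As) * c\<^sup>2))"
  let ?upper = "{xs \<in> ?S. f xs - avg f ?S > t}"
  let ?lower = "{xs \<in> ?S. - f xs - avg (\<lambda>xs. - f xs) ?S > t}"
  have "finite ?S"
    using assms(1) finite_listset by blast
  have "avg (\<lambda>xs. - f xs) ?S = - avg f ?S"
    by (simp add: avg_def sum_negf)
  then have "{xs \<in> ?S. \<bar>f xs - avg f ?S\<bar> > t} \<subseteq> ?upper \<union> ?lower"
    by auto
  then have "card {xs \<in> ?S. \<bar>f xs - avg f ?S\<bar> > t} \<le> card (?upper \<union> ?lower)"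
    using \<open>finite ?S\<close> by (intro card_mono) auto
  also have "\<dots> \<le> card ?upper + card ?lower"
    by (rule card_Un_le)
  finally have "real (card {xs \<in> ?S. \<bar>f xs - avg f ?S\<bar> > t}) \<le> real (card ?upper) + real (card ?lower)"
    by linarith
  also have "\<dots> \<le> ?bound + ?bound"
    using assms bounded_differences_uminus[of f As c]
    by (intro add_mono upper_tail_listset) auto
  finally show ?thesis
    by simp
qed

section \<open>Vector colourings\<close>

lemma exists_nonzero_orthogonal:
  fixes ws :: "(nat \<Rightarrow> real) list"
  assumes "finite I" and "length ws < card I"
  shows "\<exists>z. (\<exists>c\<in>I. z c \<noteq> 0) \<and> (\<forall>w\<in>set ws. (\<Sum>c\<in>I. z c * w c) = 0)"
  using assms
proof (induction "length ws" arbitrary: ws I)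
  case 0
  then obtain c where "c \<in> I"
    by fastforce
  with 0 show ?case
    by (intro exI[of _ "\<lambda>_. 1"]) auto
next
  case (Suc k)
  then obtain w ws' where ws: "ws = w # ws'" "length ws' = k"
    by (cases ws) auto
  show ?case
  proof (cases "\<forall>c\<in>I. w c = 0")
    case True
    with Suc ws show ?thesis
      by fastforce
  next
    case False
    then obtain p where p: "p \<in> I" "w p \<noteq> 0"
      by auto
    define I' where "I' = I - {p}"
    \<comment> \<open>Gaussian elimination of the coordinate \<open>p\<close> from the remaining vectors\<close>
    define reduce where "reduce = (\<lambda>u c. u c - (u p / w p) * w c)"
    have "length (map reduce ws') < card I'"
      using Suc.prems p ws by (simp add: I'_def)
    then obtain z' where z': "\<exists>c\<in>I'. z' c \<noteq> 0" "\<forall>u\<in>set ws'. (\<Sum>c\<in>I'. z' c * reduce u c) = 0"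
      using Suc.hyps(1)[of "map reduce ws'" I'] Suc.prems(1) ws(2) by (auto simp: I'_def)
    define z where "z = z'(p := - (\<Sum>c\<in>I'. z' c * w c) / w p)"
    have split: "(\<Sum>c\<in>I. z c * u c) = z p * u p + (\<Sum>c\<in>I'. z' c * u c)" for u
    proof -
      have "(\<Sum>c\<in>I'. z c * u c) = (\<Sum>c\<in>I'. z' c * u c)"
        by (intro sum.cong) (auto simp: z_def I'_def)
      then show ?thesis
        using p Suc.prems(1) by (simp add: I'_def sum.remove)
    qed
    have "(\<Sum>c\<in>I. z c * u c) = 0" if "u \<in> set ws'" for u
    proof -
      have "(\<Sum>c\<in>I'. z' c * u c) - (u p / w p) * (\<Sum>c\<in>I'. z' c * w c) = 0"
        using z'(2) that by (simp add: reduce_def algebra_simps sum_subtractf sum_distrib_left)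
      then show ?thesis
        using p unfolding split by (simp add: z_def field_simps)
    qed
    moreover have "(\<Sum>c\<in>I. z c * w c) = 0"
      using p unfolding split by (simp add: z_def)
    moreover have "\<exists>c\<in>I. z c \<noteq> 0"
      using z'(1) by (auto simp: z_def I'_def)
    ultimately show ?thesis
      using ws(1) by auto
  qed
qed

lemma exists_unit_orthogonal:
  assumes "finite W" and "card W < n"
  shows "\<exists>u. inner_n n u u = 1 \<and> (\<forall>w\<in>W. inner_n n u w = 0)"
proof -
  obtain ws where ws: "set ws = W" "distinct ws"
    using finite_distinct_list[OF assms(1)] by blast
  then have "length ws < card {..<n}"
    using assms(2) distinct_card by fastforce
  then obtain z where z: "\<exists>c\<in>{..<n}. z c \<noteq> 0" "\<forall>w\<in>W. (\<Sum>c<n. z c * w c) = 0"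
    using exists_nonzero_orthogonal[of "{..<n}" ws] ws(1) by auto
  define s where "s = inner_n n z z"
  from z(1) obtain c0 where "c0 < n" "z c0 \<noteq> 0"
    by auto
  then have "0 < z c0 * z c0"
    by (metis not_real_square_gt_zero)
  also have "\<dots> \<le> s"
    unfolding s_def inner_n_def using \<open>c0 < n\<close> by (intro member_le_sum) auto
  finally have "s > 0" .
  define u where "u = (\<lambda>c. z c / sqrt s)"
  have "inner_n n u u = s / (sqrt s * sqrt s)"
    by (simp add: u_def inner_n_def s_def sum_divide_distrib)
  then have "inner_n n u u = 1"
    using \<open>s > 0\<close> by simp
  moreover have "inner_n n u w = 0" if "w \<in> W" for w
    using z(2) that by (simp add: u_def inner_n_def flip: sum_divide_distrib)
  ultimately show ?thesis
    by blast
qed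

lemma inner_n_commute: "inner_n n x y = inner_n n y x"
  by (simp add: inner_n_def mult.commute)

lemma inner_n_diff_scale_left:
  "inner_n n (\<lambda>c. \<alpha> * p c - \<beta> * q c) w = \<alpha> * inner_n n p w - \<beta> * inner_n n q w"
  unfolding inner_n_def by (simp add: sum_subtractf sum_distrib_left algebra_simps)

lemma inner_n_diff_scale_right:
  "inner_n n w (\<lambda>c. \<alpha> * p c - \<beta> * q c) = \<alpha> * inner_n n w p - \<beta> * inner_n n w q"
  unfolding inner_n_def by (simp add: sum_subtractf sum_distrib_left algebra_simps)

lemma vector_coloring_mono:
  assumes "vector_coloring i n H' k v"
    and "\<forall>a\<in>Vset n. \<forall>b\<in>Vset n. a \<noteq> b \<longrightarrow> {a, b} \<in> H \<longrightarrow> {a, b} \<in> H'"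
  shows "vector_coloring i n H k v"
  using assms unfolding vector_coloring_def by (cases i) (auto, fastforce)

lemma inner_n_tilt:
  assumes "inner_n n u u = 1" and "inner_n n u p = 0" and "inner_n n u q = 0"
  shows "inner_n n (\<lambda>c. \<alpha> * p c - \<beta> * u c) (\<lambda>c. \<alpha> * q c - \<beta> * u c) = \<alpha>\<^sup>2 * inner_n n p q + \<beta>\<^sup>2"
  using assms inner_n_commute[of n u p]
  by (simp add: inner_n_diff_scale_left inner_n_diff_scale_right power2_eq_square)

lemma inner_n_tilt_axis:
  assumes "inner_n n u u = 1" and "inner_n n u q = 0"
  shows "inner_n n u (\<lambda>c. \<alpha> * q c - \<beta> * u c) = - \<beta>"
  using assms by (simp add: inner_n_diff_scale_right)

text \<open>The vector of \<open>a\<close> is replaced by a unit vector \<open>u\<close> orthogonal to all other vectors, and the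
  other vectors are tilted towards \<open>-u\<close> so that they all make the angle \<open>-1/k\<close> with \<open>u\<close>; this
  rescales every other deviation from the threshold by the positive factor \<open>1 - 1/k\<^sup>2\<close>.\<close>
lemma vector_coloring_tilt:
  assumes col: "vector_coloring i n H' k v" and "k > 1" and "a \<in> Vset n"
    and agree: "\<forall>x\<in>Vset n. \<forall>y\<in>Vset n. x \<noteq> y \<longrightarrow> x \<noteq> a \<longrightarrow> y \<noteq> a \<longrightarrow> ({x, y} \<in> H \<longleftrightarrow> {x, y} \<in> H')"
    and u: "inner_n n u u = 1" "\<forall>x\<in>Vset n - {a}. inner_n n u (v x) = 0"
  shows "vector_coloring i n H (k + 1)
           (\<lambda>x. if x = a then u else (\<lambda>c. sqrt (1 - 1 / k\<^sup>2) * v x c - (1 / k) * u c))"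
proof -
  define \<alpha> where "\<alpha> = sqrt (1 - 1 / k\<^sup>2)"
  define w where "w = (\<lambda>x. if x = a then u else (\<lambda>c. \<alpha> * v x c - (1 / k) * u c))"
  have "1 / k\<^sup>2 < 1"
    using \<open>k > 1\<close> by (simp add: power_one_over[symmetric] power_less_one_iff)
  then have \<alpha>2: "\<alpha>\<^sup>2 = 1 - 1 / k\<^sup>2" "\<alpha>\<^sup>2 > 0"
    by (simp_all add: \<alpha>_def)
  have v_unit: "inner_n n (v x) (v x) = 1" if "x \<in> Vset n" for x
    using col that by (simp add: vector_coloring_def)
  have unit: "inner_n n (w x) (w x) = 1" if "x \<in> Vset n" for x
  proof (cases "x = a")
    case False
    then show ?thesis
      using that u inner_n_tilt[OF u(1), of "v x" "v x" \<alpha> "1 / k"] \<alpha>2(1) v_unit[OF that]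
      by (simp add: w_def power_divide)
  qed (simp add: w_def u(1))
  have star_left: "inner_n n u (w y) = - 1 / (k + 1 - 1)" if "y \<in> Vset n" "y \<noteq> a" for y
    using that u inner_n_tilt_axis[OF u(1), where q = "v y" and \<alpha> = \<alpha> and \<beta> = "1 / k"]
    by (simp add: w_def)
  have star: "inner_n n (w x) (w y) = - 1 / (k + 1 - 1)"
    if "x \<in> Vset n" "y \<in> Vset n" "x \<noteq> y" "x = a \<or> y = a" for x y
    using that star_left[of y] star_left[of x] inner_n_commute[of n "w x" u] by (auto simp: w_def)
  have rescaled: "inner_n n (w x) (w y) - - 1 / (k + 1 - 1) = \<alpha>\<^sup>2 * (inner_n n (v x) (v y) - - 1 / (k - 1))"
    if "x \<in> Vset n" "y \<in> Vset n" "x \<noteq> a" "y \<noteq> a" for x y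
  proof -
    have tilted: "inner_n n (w x) (w y) = (1 - 1 / k\<^sup>2) * inner_n n (v x) (v y) + 1 / k\<^sup>2"
      using that u inner_n_tilt[OF u(1), of "v x" "v y" \<alpha> "1 / k"] \<alpha>2(1)
      by (simp add: w_def power_divide)
    show ?thesis
      unfolding tilted \<alpha>2(1) using \<open>k > 1\<close> by (simp add: field_simps power2_eq_square)
  qed
  have off_star: "(inner_n n (w x) (w y) \<le> - 1 / (k + 1 - 1) \<longleftrightarrow> inner_n n (v x) (v y) \<le> - 1 / (k - 1))
      \<and> (inner_n n (w x) (w y) = - 1 / (k + 1 - 1) \<longleftrightarrow> inner_n n (v x) (v y) = - 1 / (k - 1))
      \<and> (inner_n n (w x) (w y) \<ge> - 1 / (k + 1 - 1) \<longleftrightarrow> inner_n n (v x) (v y) \<ge> - 1 / (k - 1))"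
    if "x \<in> Vset n" "y \<in> Vset n" "x \<noteq> a" "y \<noteq> a" for x y
    using rescaled[OF that] \<alpha>2(2)
    by (smt (verit, best) mult_le_0_iff mult_eq_0_iff zero_le_mult_iff)
  have "vector_coloring i n H (k + 1) w"
    unfolding vector_coloring_def
  proof (intro conjI ballI impI)
    fix x y assume xy: "x \<in> Vset n" "y \<in> Vset n" "x \<noteq> y \<and> {x, y} \<in> H"
    show "if i = Half then inner_n n (w x) (w y) \<le> - 1 / (k + 1 - 1)
          else inner_n n (w x) (w y) = - 1 / (k + 1 - 1)"
    proof (cases "x = a \<or> y = a")
      case False
      then have "{x, y} \<in> H'"
        using agree xy by blast
      then show ?thesis
        using col xy False off_star[of x y] unfolding vector_coloring_def by auto
    qed (use star xy in auto)
  next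
    fix x y assume xy: "i = Two" "x \<in> Vset n" "y \<in> Vset n" "x \<noteq> y \<and> {x, y} \<notin> H"
    show "inner_n n (w x) (w y) \<ge> - 1 / (k + 1 - 1)"
    proof (cases "x = a \<or> y = a")
      case False
      then have "{x, y} \<notin> H'"
        using agree xy by blast
      then show ?thesis
        using col xy False off_star[of x y] unfolding vector_coloring_def by auto
    qed (use star xy in auto)
  qed (use unit in auto)
  then show ?thesis
    unfolding w_def \<alpha>_def .
qed

lemma vector_coloring_if_simplex:
  assumes "\<forall>a\<in>Vset n. inner_n n (v a) (v a) = 1"
    and "\<forall>a\<in>Vset n. \<forall>b\<in>Vset n. a \<noteq> b \<longrightarrow> inner_n n (v a) (v b) = - 1 / (k - 1)"
  shows "vector_coloring i n H k v"
  using assms unfolding vector_coloring_def by auto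

lemma sum_centered_indicators:
  fixes q :: real and n p p' :: nat
  assumes "p < n" and "p' < n"
  shows "(\<Sum>c<n. ((if c = p then 1 else 0) - q) * ((if c = p' then 1 else 0) - q))
           = (if p = p' then 1 else 0) - 2 * q + real n * q\<^sup>2"
proof -
  have "(\<Sum>c<n. ((if c = p then 1 else 0) - q) * ((if c = p' then 1 else 0) - q))
      = (\<Sum>c<n. (if c = p then if p = p' then 1 else 0 else 0) - (if c = p' then q else 0)
                 - (if c = p then q else 0) + q\<^sup>2)"
    by (intro sum.cong) (auto simp: power2_eq_square algebra_simps)
  also have "\<dots> = (if p = p' then 1 else 0) - 2 * q + real n * q\<^sup>2"
    using assms by (simp add: sum.distrib sum_subtractf)
  finally show ?thesis .
qed

text \<open>The vertices of a regular simplex centred at the origin form a vector \<open>n\<close>-colouring of every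
  graph on \<open>n \<ge> 2\<close> vertices.\<close>
lemma vector_coloring_exists:
  assumes "n > 0"
  shows "\<exists>k v. k > 1 \<and> vector_coloring i n H k v"
proof (cases "n = 1")
  case True
  have "vector_coloring i n H 2 (\<lambda>x c. 1)"
    by (rule vector_coloring_if_simplex) (auto simp: True Vset_def inner_n_def)
  then show ?thesis
    by (intro exI[of _ 2]) auto
next
  case False
  then have "n \<ge> 2"
    using assms by simp
  define q :: real where "q = 1 / n"
  define v :: "nat \<Rightarrow> nat \<Rightarrow> real" where "v = (\<lambda>x c. ((if c = x - 1 then 1 else 0) - q) / sqrt (1 - q))"
  have "q < 1"
    using \<open>n \<ge> 2\<close> by (simp add: q_def)
  have gram: "inner_n n (v x) (v y) = ((if x = y then 1 else 0) - q) / (1 - q)"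
    if "x \<in> Vset n" "y \<in> Vset n" for x y
  proof -
    have "x - 1 < n" "y - 1 < n" "x - 1 = y - 1 \<longleftrightarrow> x = y"
      using that by (auto simp: Vset_def)
    moreover have "n * q\<^sup>2 = q"
      using \<open>n \<ge> 2\<close> by (simp add: q_def power2_eq_square)
    ultimately show ?thesis
      using \<open>q < 1\<close> sum_centered_indicators[where p = "x - 1" and p' = "y - 1" and n = n and q = q]
      by (simp add: inner_n_def v_def real_sqrt_mult[symmetric] flip: sum_divide_distrib)
  qed
  have "- q / (1 - q) = - 1 / (real n - 1)"
    using \<open>n \<ge> 2\<close> by (simp add: q_def field_simps)
  then have "vector_coloring i n H (real n) v"
    using gram \<open>q < 1\<close> by (intro vector_coloring_if_simplex) auto
  then show ?thesis
    using \<open>n \<ge> 2\<close> by (intro exI[of _ "real n"]) auto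
qed

section \<open>Stability of the theta functions under adding an edge\<close>

definition coloring_numbers :: "theta_index \<Rightarrow> nat \<Rightarrow> nat set set \<Rightarrow> real set" where
  "coloring_numbers i n H = {k. k > 1 \<and> (\<exists>v. vector_coloring i n H k v)}"

lemma theta_eq_Inf_coloring_numbers: "theta i n E = Inf (coloring_numbers i n (complement n E))"
  by (simp add: theta_def theta_bar_def coloring_numbers_def)

lemma coloring_numbers_nonempty: "n > 0 \<Longrightarrow> coloring_numbers i n H \<noteq> {}"
  using vector_coloring_exists unfolding coloring_numbers_def by blast

lemma bdd_below_coloring_numbers: "bdd_below (coloring_numbers i n H)"
  unfolding coloring_numbers_def bdd_below_def by (auto intro!: exI[of _ 1])

lemma Inf_coloring_numbers_mono:
  assumes "n > 0" and "\<forall>a\<in>Vset n. \<forall>b\<in>Vset n. a \<noteq> b \<longrightarrow> {a, b} \<in> H \<longrightarrow> {a, b} \<in> H'"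
  shows "Inf (coloring_numbers i n H) \<le> Inf (coloring_numbers i n H')"
proof (rule cInf_superset_mono[OF coloring_numbers_nonempty[OF assms(1)] bdd_below_coloring_numbers])
  show "coloring_numbers i n H' \<subseteq> coloring_numbers i n H"
    using vector_coloring_mono[OF _ assms(2)] unfolding coloring_numbers_def by blast
qed

lemma Inf_coloring_numbers_le_plus_one:
  assumes "a \<in> Vset n"
    and agree: "\<forall>x\<in>Vset n. \<forall>y\<in>Vset n. x \<noteq> y \<longrightarrow> x \<noteq> a \<longrightarrow> y \<noteq> a \<longrightarrow> ({x, y} \<in> H \<longleftrightarrow> {x, y} \<in> H')"
  shows "Inf (coloring_numbers i n H) \<le> Inf (coloring_numbers i n H') + 1"
proof -
  have "n > 0"
    using assms(1) by (simp add: Vset_def)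
  have "Inf (coloring_numbers i n H) \<le> k + 1" if k: "k \<in> coloring_numbers i n H'" for k
  proof -
    obtain v where v: "k > 1" "vector_coloring i n H' k v"
      using k by (auto simp: coloring_numbers_def)
    have "card (v ` (Vset n - {a})) \<le> n - 1"
      using card_image_le[of "Vset n - {a}" v] assms(1) by (simp add: Vset_def)
    then have "card (v ` (Vset n - {a})) < n"
      using \<open>n > 0\<close> by linarith
    then obtain u where "inner_n n u u = 1" "\<forall>x\<in>Vset n - {a}. inner_n n u (v x) = 0"
      using exists_unit_orthogonal[of "v ` (Vset n - {a})" n] by (auto simp: Vset_def)
    then have "k + 1 \<in> coloring_numbers i n H"
      using vector_coloring_tilt[OF v(2) v(1) assms(1) agree] v(1)
      unfolding coloring_numbers_def by auto
    then show ?thesis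
      by (rule cInf_lower[OF _ bdd_below_coloring_numbers])
  qed
  then have "Inf (coloring_numbers i n H) - 1 \<le> Inf (coloring_numbers i n H')"
    by (intro cInf_greatest[OF coloring_numbers_nonempty[OF \<open>n > 0\<close>]]) (simp add: algebra_simps)
  then show ?thesis
    by simp
qed

lemma doubleton_mem_complement_iff:
  assumes "x \<noteq> y"
  shows "{x, y} \<in> complement n E \<longleftrightarrow> x \<in> Vset n \<and> y \<in> Vset n \<and> {x, y} \<notin> E"
  using assms unfolding complement_def by (auto simp: doubleton_eq_iff insert_commute)

lemma theta_insert_le:
  assumes "n > 0"
  shows "theta i n (insert e E) \<le> theta i n E"
  unfolding theta_eq_Inf_coloring_numbers
  using assms by (intro Inf_coloring_numbers_mono) (auto simp: doubleton_mem_complement_iff)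

text \<open>Any vertex of \<open>e\<close> (or any vertex at all, if \<open>e\<close> has none in \<open>Vset n\<close>) meets every pair on
  which the two complements differ.\<close>
lemma theta_le_theta_insert_plus_one:
  assumes "n > 0"
  shows "theta i n E \<le> theta i n (insert e E) + 1"
proof -
  obtain a where "a \<in> Vset n" "\<forall>x\<in>Vset n. \<forall>y\<in>Vset n. x \<noteq> a \<longrightarrow> y \<noteq> a \<longrightarrow> {x, y} \<noteq> e"
  proof (cases "e \<inter> Vset n = {}")
    case True
    then show ?thesis
      using that[of 1] assms by (auto simp: Vset_def)
  next
    case False
    then show ?thesis
      using that by blast
  qed
  then show ?thesis
    unfolding theta_eq_Inf_coloring_numbers
    by (intro Inf_coloring_numbers_le_plus_one) (auto simp: doubleton_mem_complement_iff)
qed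

lemma abs_theta_union_diff_le:
  assumes "n > 0" and "finite D"
  shows "\<bar>theta i n (E \<union> D) - theta i n E\<bar> \<le> card D"
  using assms(2)
proof (induction D rule: finite_induct)
  case (insert d D)
  have "E \<union> insert d D = insert d (E \<union> D)"
    by auto
  then show ?case
    using insert theta_insert_le[OF assms(1), of i d "E \<union> D"]
          theta_le_theta_insert_plus_one[OF assms(1), of i "E \<union> D" d]
    by auto
qed simp

lemma abs_theta_diff_le:
  assumes "n > 0" and "finite E1" and "finite E2"
  shows "\<bar>theta i n E1 - theta i n E2\<bar> \<le> card (E1 - E2) + card (E2 - E1)"
proof -
  have "E1 = (E1 \<inter> E2) \<union> (E1 - E2)" "E2 = (E1 \<inter> E2) \<union> (E2 - E1)"
    by auto
  then have "\<bar>theta i n E1 - theta i n (E1 \<inter> E2)\<bar> \<le> card (E1 - E2)"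
    "\<bar>theta i n E2 - theta i n (E1 \<inter> E2)\<bar> \<le> card (E2 - E1)"
    using abs_theta_union_diff_le[OF assms(1), of "E1 - E2" i "E1 \<inter> E2"]
          abs_theta_union_diff_le[OF assms(1), of "E2 - E1" i "E1 \<inter> E2"] assms(2,3)
    by auto
  then show ?thesis
    by linarith
qed

section \<open>Perfect matchings as choice sequences\<close>

definition perfect_matching :: "'a set \<Rightarrow> 'a set set \<Rightarrow> bool" where
  "perfect_matching S \<rho> \<longleftrightarrow> (\<forall>p\<in>\<rho>. p \<subseteq> S \<and> card p = 2) \<and> (\<forall>x\<in>S. \<exists>!p. p \<in> \<rho> \<and> x \<in> p)"

lemma configurations_eq_perfect_matchings:
  "configurations n r = {\<rho>. perfect_matching (Wset n r) \<rho>}"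
  unfolding configurations_def perfect_matching_def ..

lemma perfect_matching_pairD:
  "perfect_matching S \<rho> \<Longrightarrow> p \<in> \<rho> \<Longrightarrow> p \<subseteq> S \<and> card p = 2"
  unfolding perfect_matching_def by blast

lemma perfect_matching_ex1:
  "perfect_matching S \<rho> \<Longrightarrow> x \<in> S \<Longrightarrow> \<exists>!p. p \<in> \<rho> \<and> x \<in> p"
  unfolding perfect_matching_def by blast

lemma perfect_matching_unique:
  "perfect_matching S \<rho> \<Longrightarrow> p \<in> \<rho> \<Longrightarrow> q \<in> \<rho> \<Longrightarrow> x \<in> p \<Longrightarrow> x \<in> q \<Longrightarrow> p = q"
  unfolding perfect_matching_def by blast

lemma perfect_matching_insert:
  assumes m: "perfect_matching T \<rho>" and "a \<notin> T" "b \<notin> T" "a \<noteq> b"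
  shows "perfect_matching (insert a (insert b T)) (insert {a, b} \<rho>)"
proof -
  have "\<forall>p\<in>insert {a, b} \<rho>. p \<subseteq> insert a (insert b T) \<and> card p = 2"
    using perfect_matching_pairD[OF m] assms(4) by auto
  moreover have "\<forall>y\<in>insert a (insert b T). \<exists>!p. p \<in> insert {a, b} \<rho> \<and> y \<in> p"
  proof
    fix y assume y: "y \<in> insert a (insert b T)"
    show "\<exists>!p. p \<in> insert {a, b} \<rho> \<and> y \<in> p"
    proof (cases "y \<in> T")
    case True
      then have "q \<in> insert {a, b} \<rho> \<and> y \<in> q \<longleftrightarrow> q \<in> \<rho> \<and> y \<in> q" for q
        using assms(2,3) by auto
      then show ?thesis
        using perfect_matching_ex1[OF m True] by simp
    next
      case False
      then have "p = {a, b}" if "p \<in> insert {a, b} \<rho>" "y \<in> p" for p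
        using that perfect_matching_pairD[OF m] by blast
      moreover have "y \<in> {a, b}"
        using y False by simp
      ultimately show ?thesis
        by (intro ex1I[of _ "{a, b}"]) auto
    qed
  qed
  ultimately show ?thesis
    unfolding perfect_matching_def by (rule conjI)
qed

lemma perfect_matching_remove:
  assumes m: "perfect_matching (insert a (insert b T)) \<rho>" and "a \<notin> T" "b \<notin> T"
    and ab: "{a, b} \<in> \<rho>"
  shows "perfect_matching T (\<rho> - {{a, b}})"
proof -
  have "a \<notin> p \<and> b \<notin> p" if "p \<in> \<rho> - {{a, b}}" for p
    using that perfect_matching_unique[OF m _ ab] by blast
  then have "\<forall>p\<in>\<rho> - {{a, b}}. p \<subseteq> T \<and> card p = 2"
    using perfect_matching_pairD[OF m] by blast
  moreover have "\<forall>y\<in>T. \<exists>!p. p \<in> \<rho> - {{a, b}} \<and> y \<in> p"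
  proof
    fix y assume "y \<in> T"
    then have "q \<in> \<rho> - {{a, b}} \<and> y \<in> q \<longleftrightarrow> q \<in> \<rho> \<and> y \<in> q" for q
      using assms(2,3) by auto
    then show "\<exists>!p. p \<in> \<rho> - {{a, b}} \<and> y \<in> p"
      using perfect_matching_ex1[OF m] \<open>y \<in> T\<close> by simp
  qed
  ultimately show ?thesis
    unfolding perfect_matching_def by (rule conjI)
qed

lemma card_perfect_matching_pairs_containing_le1:
  assumes "perfect_matching S \<rho>"
  shows "card {p \<in> \<rho>. x \<in> p} \<le> 1"
proof (cases "finite {p \<in> \<rho>. x \<in> p}")
  case True
  then show ?thesis
    unfolding One_nat_def card_le_Suc0_iff_eq[OF True] using perfect_matching_unique[OF assms] by blast
qed simp

text \<open>The \<open>x\<close>-th entry is removed by overwriting it with the head and dropping the head, rather than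
  by deleting it in place: then removing the \<open>y\<close>-th instead of the \<open>x\<close>-th entry only renames two
  entries of the remaining list (lemma \<open>remove_swap_change\<close>).\<close>
definition remove_swap :: "nat \<Rightarrow> 'a list \<Rightarrow> 'a list" where
  "remove_swap x L = tl (L[x := hd L])"

lemma length_remove_swap [simp]: "length (remove_swap x L) = length L - 1"
  by (simp add: remove_swap_def)

lemma set_remove_swap:
  assumes "distinct L" and "x < length L"
  shows "set (remove_swap x L) = set L - {L ! x}" and "distinct (remove_swap x L)"
proof -
  obtain b L' where L: "L = b # L'"
    using assms(2) by (cases L) auto
  have "set (remove_swap x L) = set L - {L ! x} \<and> distinct (remove_swap x L)"
  proof (cases x)
    case (Suc y)
    then have "y < length L'" "b \<noteq> L' ! y"
      using assms L by auto
    then show ?thesis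
      using assms L Suc by (auto simp: remove_swap_def set_update_distinct intro: distinct_list_update)
  qed (use assms L in \<open>auto simp: remove_swap_def\<close>)
  then show "set (remove_swap x L) = set L - {L ! x}" "distinct (remove_swap x L)"
    by auto
qed

lemma remove_swap_map: "L \<noteq> [] \<Longrightarrow> remove_swap x (map g L) = map g (remove_swap x L)"
  by (simp add: remove_swap_def map_update hd_map map_tl)

lemma remove_swap_change:
  assumes "distinct L" and "x < length L" and "y < length L" and "x \<noteq> y"
  shows "remove_swap y L
           = map (\<lambda>u. if u = hd L then L ! x else if u = L ! y then hd L else u) (remove_swap x L)"
proof (rule nth_equalityI)
  fix i assume "i < length (remove_swap y L)"
  then have "Suc i < length L" "L \<noteq> []"
    by auto
  then show "remove_swap y L ! i
      = map (\<lambda>u. if u = hd L then L ! x else if u = L ! y then hd L else u) (remove_swap x L) ! i"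
    using assms by (auto simp: remove_swap_def hd_conv_nth nth_tl nth_list_update nth_eq_iff_index_eq)
qed simp

fun matching_of_choices :: "'a list \<Rightarrow> nat list \<Rightarrow> 'a set set" where
  "matching_of_choices (a # L) (x # xs) = insert {a, L ! x} (matching_of_choices (remove_swap x L) xs)"
| "matching_of_choices _ _ = {}"

fun choice_ranges :: "nat \<Rightarrow> nat set list" where
  "choice_ranges 0 = []"
| "choice_ranges (Suc k) = {..<2 * k + 1} # choice_ranges k"

lemma length_choice_ranges [simp]: "length (choice_ranges k) = k"
  by (induction k) auto

lemma choice_ranges_finite_nonempty: "\<forall>A\<in>set (choice_ranges k). finite A \<and> A \<noteq> {}"
  by (induction k) auto

lemma listset_choice_ranges_Suc:
  "xs \<in> listset (choice_ranges (Suc k)) \<longleftrightarrow>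
     (\<exists>x xs'. xs = x # xs' \<and> x < 2 * k + 1 \<and> xs' \<in> listset (choice_ranges k))"
  by (auto simp: set_Cons_def)

lemma finite_matching_of_choices: "finite (matching_of_choices L xs)"
  by (induction L xs rule: matching_of_choices.induct) auto

lemma matching_of_choices_Cons_cases:
  assumes "distinct L" and "length L = 2 * Suc k" and "xs \<in> listset (choice_ranges (Suc k))"
  obtains a L' x xs' where "L = a # L'" "xs = x # xs'" "x < length L'" "xs' \<in> listset (choice_ranges k)"
    "a \<notin> set L'" "distinct L'" "length (remove_swap x L') = 2 * k"
    "set (remove_swap x L') = set L' - {L' ! x}" "distinct (remove_swap x L')"
    "matching_of_choices L xs = insert {a, L' ! x} (matching_of_choices (remove_swap x L') xs')"
proof -
  obtain a L' where L: "L = a # L'"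
    using assms(2) by (cases L) auto
  obtain x xs' where "xs = x # xs'" "x < 2 * k + 1" "xs' \<in> listset (choice_ranges k)"
    using assms(3) listset_choice_ranges_Suc by blast
  then show ?thesis
    using that[of a L' x xs'] set_remove_swap[of L' x] assms(1,2) L by auto
qed

lemma perfect_matching_of_choices:
  "distinct L \<Longrightarrow> length L = 2 * k \<Longrightarrow> xs \<in> listset (choice_ranges k)
    \<Longrightarrow> perfect_matching (set L) (matching_of_choices L xs)"
proof (induction k arbitrary: L xs)
  case 0
  then show ?case
    by (simp add: perfect_matching_def)
next
  case (Suc k)
  from Suc.prems obtain a L' x xs' where L: "L = a # L'" "xs = x # xs'" "x < length L'"
    "xs' \<in> listset (choice_ranges k)" "a \<notin> set L'" "distinct L'" "length (remove_swap x L') = 2 * k"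
    "set (remove_swap x L') = set L' - {L' ! x}" "distinct (remove_swap x L')"
    "matching_of_choices L xs = insert {a, L' ! x} (matching_of_choices (remove_swap x L') xs')"
    by (rule matching_of_choices_Cons_cases)
  have "L' ! x \<in> set L'"
    using L(3) by simp
  then have set_L: "set L = insert a (insert (L' ! x) (set (remove_swap x L')))"
    using L(1,8) by auto
  have "perfect_matching (insert a (insert (L' ! x) (set (remove_swap x L'))))
      (insert {a, L' ! x} (matching_of_choices (remove_swap x L') xs'))"
    using L(5,8) \<open>L' ! x \<in> set L'\<close> by (intro perfect_matching_insert[OF Suc.IH[OF L(9,7,4)]]) auto
  then show ?case
    unfolding set_L L(10) .
qed

lemma inj_on_matching_of_choices:
  "distinct L \<Longrightarrow> length L = 2 * k \<Longrightarrow> inj_on (matching_of_choices L) (listset (choice_ranges k))"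
proof (induction k arbitrary: L)
  case (Suc k)
  show ?case
  proof (rule inj_onI)
    fix xs ys assume xs: "xs \<in> listset (choice_ranges (Suc k))" and ys: "ys \<in> listset (choice_ranges (Suc k))"
      and eq: "matching_of_choices L xs = matching_of_choices L ys"
    obtain a L' x xs' where X: "L = a # L'" "xs = x # xs'" "x < length L'"
      "xs' \<in> listset (choice_ranges k)" "a \<notin> set L'" "distinct L'" "length (remove_swap x L') = 2 * k"
      "set (remove_swap x L') = set L' - {L' ! x}" "distinct (remove_swap x L')"
      "matching_of_choices L xs = insert {a, L' ! x} (matching_of_choices (remove_swap x L') xs')"
      by (rule matching_of_choices_Cons_cases[OF Suc.prems xs])
    obtain y ys' where Y: "ys = y # ys'" "y < length L'" "ys' \<in> listset (choice_ranges k)"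
      "set (remove_swap y L') = set L' - {L' ! y}"
      "matching_of_choices L ys = insert {a, L' ! y} (matching_of_choices (remove_swap y L') ys')"
      using matching_of_choices_Cons_cases[OF Suc.prems ys] X(1) by (metis list.inject)
    have perfect: "perfect_matching (set L) (matching_of_choices L xs)"
      using perfect_matching_of_choices[OF Suc.prems xs] .
    have "{a, L' ! x} = {a, L' ! y}"
      using perfect_matching_unique[OF perfect, of "{a, L' ! x}" "{a, L' ! y}" a] X(10) Y(5) eq by auto
    then have "x = y"
      using X(3,5,6) Y(2) by (auto simp: doubleton_eq_iff nth_eq_iff_index_eq)
    have rest: "matching_of_choices (remove_swap z L') zs = matching_of_choices L (z # zs) - {{a, L' ! z}}"
      if "z < length L'" "zs \<in> listset (choice_ranges k)" "set (remove_swap z L') = set L' - {L' ! z}" for z zs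
    proof -
      have "length (remove_swap z L') = 2 * k"
        using X(7) by simp
      then have "perfect_matching (set (remove_swap z L')) (matching_of_choices (remove_swap z L') zs)"
        using perfect_matching_of_choices set_remove_swap(2)[OF X(6) that(1)] that(2) by blast
      then have "{a, L' ! z} \<notin> matching_of_choices (remove_swap z L') zs"
        using perfect_matching_pairD X(5) that(3) by blast
      then show ?thesis
        using X(1) by simp
    qed
    have "matching_of_choices (remove_swap x L') xs' = matching_of_choices (remove_swap x L') ys'"
      using rest[OF X(3,4,8)] rest[OF Y(2,3,4)] eq X(2) Y(1) \<open>x = y\<close> by simp
    then have "xs' = ys'"
      using inj_onD[OF Suc.IH[OF X(9,7)] _ X(4)] Y(3) \<open>x = y\<close> by simp
    then show "xs = ys"
      using X(2) Y(1) \<open>x = y\<close> by simp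
  qed
qed simp

lemma perfect_matching_in_range_of_choices:
  "distinct L \<Longrightarrow> length L = 2 * k \<Longrightarrow> perfect_matching (set L) \<rho>
    \<Longrightarrow> \<rho> \<in> matching_of_choices L ` listset (choice_ranges k)"
proof (induction k arbitrary: L \<rho>)
  case 0
  then have "\<rho> = {}"
    unfolding perfect_matching_def by (auto simp: card_2_iff)
  then show ?case
    using 0 by simp
next
  case (Suc k)
  obtain a L' where L: "L = a # L'" "a \<notin> set L'" "distinct L'" "length L' = 2 * k + 1"
    using Suc.prems by (cases L) auto
  obtain p where p: "p \<in> \<rho>" "a \<in> p" "p \<subseteq> set L" "card p = 2"
    using Suc.prems(3) L(1) perfect_matching_ex1 perfect_matching_pairD by (metis list.set_intros(1))
  then obtain b where b: "p = {a, b}" "a \<noteq> b"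
    by (auto simp: card_2_iff doubleton_eq_iff)
  then obtain x where x: "x < length L'" "L' ! x = b"
    using p(3) L(1) by (auto simp: in_set_conv_nth)
  have R: "set (remove_swap x L') = set L' - {b}" "distinct (remove_swap x L')"
    "length (remove_swap x L') = 2 * k"
    using set_remove_swap[OF L(3) x(1)] x(2) L(4) by auto
  have "b \<in> set L'"
    using x nth_mem by blast
  then have set_L: "set L = insert a (insert b (set (remove_swap x L')))"
    using R(1) L(1) by auto
  have "perfect_matching (insert a (insert b (set (remove_swap x L')))) \<rho>"
    using Suc.prems(3) unfolding set_L .
  then have "perfect_matching (set (remove_swap x L')) (\<rho> - {{a, b}})"
    using R(1) L(2) b(1) p(1) by (intro perfect_matching_remove) auto
  then have "\<rho> - {{a, b}} \<in> matching_of_choices (remove_swap x L') ` listset (choice_ranges k)"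
    by (rule Suc.IH[OF R(2,3)])
  then obtain xs where xs: "xs \<in> listset (choice_ranges k)"
    "matching_of_choices (remove_swap x L') xs = \<rho> - {{a, b}}"
    by (auto simp del: listset.simps)
  have "\<rho> = matching_of_choices L (x # xs)"
    using L(1) x(2) xs(2) p(1) b(1) by (simp add: insert_absorb)
  moreover have "x # xs \<in> listset (choice_ranges (Suc k))"
    using x(1) L(4) xs(1) by (simp add: set_Cons_def)
  ultimately show ?case
    by (rule image_eqI)
qed

lemma bij_betw_matching_of_choices:
  assumes "distinct L" and "length L = 2 * k"
  shows "bij_betw (matching_of_choices L) (listset (choice_ranges k)) {\<rho>. perfect_matching (set L) \<rho>}"
  unfolding bij_betw_def
  using inj_on_matching_of_choices[OF assms] perfect_matching_of_choices[OF assms]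
        perfect_matching_in_range_of_choices[OF assms] by blast

lemma matching_of_choices_map:
  "length L = 2 * k \<Longrightarrow> xs \<in> listset (choice_ranges k)
    \<Longrightarrow> matching_of_choices (map g L) xs = (\<lambda>p. g ` p) ` matching_of_choices L xs"
proof (induction k arbitrary: L xs)
  case (Suc k)
  obtain a L' where L: "L = a # L'" "length L' = 2 * k + 1"
    using Suc.prems(1) by (cases L) auto
  obtain x xs' where xs: "xs = x # xs'" "x < 2 * k + 1" "xs' \<in> listset (choice_ranges k)"
    using Suc.prems(2) listset_choice_ranges_Suc by blast
  have "L' \<noteq> []"
    using L(2) by auto
  then show ?case
    using Suc.IH[of "remove_swap x L'" xs'] L xs by (simp add: remove_swap_map)
qed simp

lemma card_matching_of_choices_change_head:
  assumes "distinct L" and "length L = 2 * Suc k" and "x # xs \<in> listset (choice_ranges (Suc k))"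
    and "y < 2 * k + 1"
  shows "card (matching_of_choices L (x # xs) - matching_of_choices L (y # xs)) \<le> 3"
proof -
  obtain a L' where L: "L = a # L'" "x < length L'" "xs \<in> listset (choice_ranges k)" "distinct L'"
    "length (remove_swap x L') = 2 * k" "set (remove_swap x L') = set L' - {L' ! x}"
    "distinct (remove_swap x L')"
    by (rule matching_of_choices_Cons_cases[OF assms(1,2,3)]) auto
  define R where "R = remove_swap x L'"
  define M where "M = matching_of_choices R xs"
  define \<tau> where "\<tau> = (\<lambda>u. if u = hd L' then L' ! x else if u = L' ! y then hd L' else u)"
  show ?thesis
  proof (cases "x = y")
    case False
    have "y < length L'"
      using assms(2,4) L(1) by simp
    then have "remove_swap y L' = map \<tau> R"
      unfolding \<tau>_def R_def by (rule remove_swap_change[OF L(4,2) _ False])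
    then have "matching_of_choices (remove_swap y L') xs = (\<lambda>p. \<tau> ` p) ` M"
      unfolding M_def R_def using matching_of_choices_map[OF L(5,3)] by simp
    then have image: "matching_of_choices L (y # xs) = insert {a, L' ! y} ((\<lambda>p. \<tau> ` p) ` M)"
      using L(1) by simp
    have "matching_of_choices L (x # xs) - matching_of_choices L (y # xs)
        \<subseteq> insert {a, L' ! x} ({p \<in> M. hd L' \<in> p} \<union> {p \<in> M. L' ! y \<in> p})"
    proof
      fix p assume p: "p \<in> matching_of_choices L (x # xs) - matching_of_choices L (y # xs)"
      show "p \<in> insert {a, L' ! x} ({p \<in> M. hd L' \<in> p} \<union> {p \<in> M. L' ! y \<in> p})"
      proof (cases "p = {a, L' ! x}")
        case False
        then have "p \<in> M" "\<tau> ` p \<noteq> p"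
          using p L(1) image by (auto simp: M_def R_def)
        then obtain u where "u \<in> p" "\<tau> u \<noteq> u"
          by (metis image_cong image_ident)
        then show ?thesis
          using \<open>p \<in> M\<close> by (auto simp: \<tau>_def split: if_splits)
      qed simp
    qed
    then have "card (matching_of_choices L (x # xs) - matching_of_choices L (y # xs))
        \<le> card (insert {a, L' ! x} ({p \<in> M. hd L' \<in> p} \<union> {p \<in> M. L' ! y \<in> p}))"
      by (intro card_mono) (auto simp: M_def finite_matching_of_choices)
    also have "\<dots> \<le> Suc (card ({p \<in> M. hd L' \<in> p} \<union> {p \<in> M. L' ! y \<in> p}))"
      by (simp add: card_insert_if M_def finite_matching_of_choices)
    also have "\<dots> \<le> Suc (card {p \<in> M. hd L' \<in> p} + card {p \<in> M. L' ! y \<in> p})"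
      using card_Un_le by simp
    also have "\<dots> \<le> 3"
    proof -
      have le1: "card {p \<in> M. u \<in> p} \<le> 1" for u
        unfolding M_def R_def
        by (rule card_perfect_matching_pairs_containing_le1[OF perfect_matching_of_choices[OF L(7,5,3)]])
      show ?thesis
        using le1[of "hd L'"] le1[of "L' ! y"] by linarith
    qed
    finally show ?thesis .
  qed simp
qed

lemma card_matching_of_choices_update_diff:
  "distinct L \<Longrightarrow> length L = 2 * k \<Longrightarrow> xs \<in> listset (choice_ranges k) \<Longrightarrow> j < k
    \<Longrightarrow> y \<in> choice_ranges k ! j
    \<Longrightarrow> card (matching_of_choices L xs - matching_of_choices L (xs[j := y])) \<le> 3"
proof (induction k arbitrary: L xs j)
  case (Suc k)
  obtain a L' x xs' where X: "L = a # L'" "xs = x # xs'" "xs' \<in> listset (choice_ranges k)"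
    "length (remove_swap x L') = 2 * k" "distinct (remove_swap x L')"
    by (rule matching_of_choices_Cons_cases[OF Suc.prems(1,2,3)])
  show ?case
  proof (cases j)
    case 0
    then show ?thesis
      using card_matching_of_choices_change_head[OF Suc.prems(1,2)] Suc.prems(3,5) X(2) by simp
  next
    case (Suc j')
    let ?M = "matching_of_choices (remove_swap x L')"
    have "matching_of_choices L xs - matching_of_choices L (xs[j := y]) \<subseteq> ?M xs' - ?M (xs'[j' := y])"
      using X(1,2) Suc by auto
    then have "card (matching_of_choices L xs - matching_of_choices L (xs[j := y]))
        \<le> card (?M xs' - ?M (xs'[j' := y]))"
      by (intro card_mono) (auto simp: finite_matching_of_choices)
    also have "\<dots> \<le> 3"
      using Suc.IH[OF X(5,4,3)] Suc.prems(4,5) \<open>j = Suc j'\<close> by simp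
    finally show ?thesis .
  qed
qed simp

section \<open>Random configurations\<close>

lemma finite_simple_graph: "finite \<rho> \<Longrightarrow> finite (simple_graph \<rho>)"
  by (simp add: simple_graph_def proj_multigraph_def)

lemma card_simple_graph_diff_le:
  assumes "finite M" and "finite M'"
  shows "card (simple_graph M - simple_graph M') \<le> card (M - M')"
proof -
  have "simple_graph M - simple_graph M' \<subseteq> (\<lambda>p. fst ` p) ` (M - M')"
    using assms by (auto simp: simple_graph_def proj_multigraph_def)
  then have "card (simple_graph M - simple_graph M') \<le> card ((\<lambda>p. fst ` p) ` (M - M'))"
    using assms by (intro card_mono) auto
  also have "\<dots> \<le> card (M - M')"
    using assms by (intro card_image_le) auto
  finally show ?thesis .
qed

lemma abs_theta_simple_graph_diff_le:
  assumes "n > 0" and "finite M" and "finite M'"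
  shows "\<bar>theta i n (simple_graph M) - theta i n (simple_graph M')\<bar> \<le> card (M - M') + card (M' - M)"
  using abs_theta_diff_le[OF assms(1) finite_simple_graph[OF assms(2)] finite_simple_graph[OF assms(3)], of i]
        card_simple_graph_diff_le[OF assms(2,3)] card_simple_graph_diff_le[OF assms(3,2)]
  by linarith

lemma finite_configuration: "\<rho> \<in> configurations n r \<Longrightarrow> finite \<rho>"
  by (rule finite_subset[of _ "Pow (Wset n r)"]) (auto simp: configurations_def Wset_def Vset_def)

lemma configurations_encoding:
  assumes "n * r = 2 * m"
  obtains h where "bij_betw h (listset (choice_ranges m)) (configurations n r)"
    and "\<And>xs j y. xs \<in> listset (choice_ranges m) \<Longrightarrow> j < m \<Longrightarrow> y \<in> choice_ranges m ! j
           \<Longrightarrow> card (h xs - h (xs[j := y])) \<le> 3 \<and> card (h (xs[j := y]) - h xs) \<le> 3"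
proof -
  obtain L where L: "set L = Wset n r" "distinct L"
    using finite_distinct_list[of "Wset n r"] by (auto simp: Wset_def Vset_def)
  have "length L = 2 * m"
    using distinct_card[OF L(2)] L(1) assms by (simp add: Wset_def Vset_def card_cartesian_product)
  show ?thesis
  proof (rule that)
    show "bij_betw (matching_of_choices L) (listset (choice_ranges m)) (configurations n r)"
      using bij_betw_matching_of_choices[OF L(2) \<open>length L = 2 * m\<close>] L(1)
      by (simp add: configurations_eq_perfect_matchings)
    fix xs j y assume xs: "xs \<in> listset (choice_ranges m)" and j: "j < m" and y: "y \<in> choice_ranges m ! j"
    have "xs[j := y] \<in> listset (choice_ranges m)" "(xs[j := y])[j := xs ! j] = xs"
      "xs ! j \<in> choice_ranges m ! j"
      using listset_update[of xs "choice_ranges m" j y] nth_mem_listset[of xs "choice_ranges m" j] xs j y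
      by (auto simp: length_listset[OF xs])
    then show "card (matching_of_choices L xs - matching_of_choices L (xs[j := y])) \<le> 3
        \<and> card (matching_of_choices L (xs[j := y]) - matching_of_choices L xs) \<le> 3"
      using card_matching_of_choices_update_diff[OF L(2) \<open>length L = 2 * m\<close>] xs j y by metis
  qed
qed

lemma theta_configurations_encoding:
  assumes "n > 0" and "n * r = 2 * m"
  obtains h where "bij_betw h (listset (choice_ranges m)) (configurations n r)"
    and "bounded_differences (\<lambda>xs. theta i n (simple_graph (h xs))) (choice_ranges m) 6"
proof -
  obtain h where h: "bij_betw h (listset (choice_ranges m)) (configurations n r)"
    and switch: "\<And>xs j y. xs \<in> listset (choice_ranges m) \<Longrightarrow> j < m \<Longrightarrow> y \<in> choice_ranges m ! j
           \<Longrightarrow> card (h xs - h (xs[j := y])) \<le> 3 \<and> card (h (xs[j := y]) - h xs) \<le> 3"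
    using configurations_encoding[OF assms(2)] by blast
  have "bounded_differences (\<lambda>xs. theta i n (simple_graph (h xs))) (choice_ranges m) 6"
    unfolding bounded_differences_def
  proof (intro ballI allI impI)
    fix xs j y assume "xs \<in> listset (choice_ranges m)" "j < length (choice_ranges m)" "y \<in> choice_ranges m ! j"
    moreover have "finite (h xs)" "finite (h (xs[j := y]))"
      using h calculation listset_update[of xs "choice_ranges m" j y]
      by (auto simp: bij_betw_def intro: finite_configuration)
    ultimately show "\<bar>theta i n (simple_graph (h xs)) - theta i n (simple_graph (h (xs[j := y])))\<bar> \<le> 6"
      using abs_theta_simple_graph_diff_le[OF assms(1), of "h xs" "h (xs[j := y])" i] switch[of xs j y]
      by simp
  qed
  with h show ?thesis
    using that by blast
qed

lemma avg_bij_betw: "bij_betw h A B \<Longrightarrow> avg (\<lambda>x. g (h x)) A = avg g B"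
  by (simp add: avg_def sum.reindex_bij_betw bij_betw_same_card)

lemma card_filter_bij_betw: "bij_betw h A B \<Longrightarrow> card {x \<in> A. P (h x)} = card {y \<in> B. P y}"
  by (rule bij_betw_same_card[of h]) (auto simp: bij_betw_def inj_on_def)

corollary McDiarmid_bij_betw:
  fixes c t :: real and g :: "'b \<Rightarrow> real"
  assumes "bij_betw h (listset As) B" and "\<forall>A\<in>set As. finite A \<and> A \<noteq> {}"
    and "bounded_differences (\<lambda>xs. g (h xs)) As c" and "t > 0"
  shows "card {y \<in> B. \<bar>g y - avg g B\<bar> > t} / card B \<le> 2 * exp (- t\<^sup>2 / (2 * real (length As) * c\<^sup>2))"
proof -
  have "card (listset As) > 0"
    using assms(2) finite_listset listset_nonempty by (metis card_gt_0_iff)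
  moreover have "card B = card (listset As)"
    using bij_betw_same_card[OF assms(1)] by simp
  moreover have "card {y \<in> B. \<bar>g y - avg g B\<bar> > t}
      = card {xs \<in> listset As. \<bar>g (h xs) - avg (\<lambda>xs. g (h xs)) (listset As)\<bar> > t}"
    using card_filter_bij_betw[OF assms(1), of "\<lambda>y. \<bar>g y - avg g B\<bar> > t"] avg_bij_betw[OF assms(1)]
    by simp
  ultimately show ?thesis
    using McDiarmid_listset[OF assms(2-4)] by (simp add: pos_divide_le_eq mult.commute)
qed

theorem lemma13:
  fixes i :: theta_index and r n :: nat and t :: real
  assumes "r > 0" and "n > 0" and "even (r * n)" and "t > 0"
  defines "C \<equiv> configurations n r"
      and "m \<equiv> r * n div 2"
      and "\<mu> \<equiv> (\<Sum>\<rho>\<in>configurations n r. theta i n (simple_graph \<rho>)) / real (card (configurations n r))"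
  shows "real (card {\<rho> \<in> C. \<bar>theta i n (simple_graph \<rho>) - \<mu>\<bar> > t}) / real (card C)
           \<le> 2 * exp (- (t ^ 2) / (128 * real m))"
proof -
  have "n * r = 2 * m" "m > 0"
    using assms(1-3) by (auto simp: m_def mult.commute elim!: evenE)
  obtain h where h: "bij_betw h (listset (choice_ranges m)) C"
    and bd: "bounded_differences (\<lambda>xs. theta i n (simple_graph (h xs))) (choice_ranges m) 6"
    using theta_configurations_encoding[OF assms(2) \<open>n * r = 2 * m\<close>] unfolding C_def by blast
  have "\<mu> = avg (\<lambda>\<rho>. theta i n (simple_graph \<rho>)) C"
    by (simp add: \<mu>_def avg_def C_def)
  then have "real (card {\<rho> \<in> C. \<bar>theta i n (simple_graph \<rho>) - \<mu>\<bar> > t}) / real (card C)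
      \<le> 2 * exp (- t\<^sup>2 / (72 * m))"
    using McDiarmid_bij_betw[OF h choice_ranges_finite_nonempty bd assms(4)] by simp
  also have "\<dots> \<le> 2 * exp (- (t ^ 2) / (128 * real m))"
    using \<open>m > 0\<close> by (simp add: frac_le)
  finally show ?thesis .
qed

end
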